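(* Let $N\ge 2$, $m\ge 3$ be integers and fix $K$ with $0<K<N$. Then the linear span of the vertex functions $\iota_k\varphi$ on $\mathcal{B}_N\vdash\mathcal{C}_m$, where $k\in\mathbb{Z}_m$ and $\varphi$ ranges over the Dirichlet eigenvectors of $L(\mathcal{B}_N)$ with eigenvalue $2K$, has dimension $m\left(\binom{N}{K}-1\right)$.
   Context: For a finite simple undirected graph $\mathcal{G}$, $L(\mathcal{G})$ denotes the unnormalized Laplacian $(Lf)(v)=\sum_{w\sim v}[f(v)-f(w)]$. The Boolean cube $\mathcal{B}_N$ has vertex set $\mathbb{Z}_2^N$, with $v\sim w$ iff $v-w=e_i$ for some standard basis vector $e_i$; its Laplacian eigenvalues are $2\kappa$, $\kappa=0,\dots,N$, the $2\kappa$-eigenspace being spanned by the Hadamard vectors $h_\gamma(v)=2^{-N/2}(-1)^{\langle v,\gamma\rangle}$ with $\gamma\in\mathbb{Z}_2^N$ having exactly $\kappa$ coordinates equal to $1$. Write $\mathbf{0}=(0,\dots,0)$, $\mathbf{1}=(1,\dots,1)$. The graph $\mathcal{B}_N\vdash\mathcal{C}_m$ is obtained by taking $m$ disjoint copies $\mathcal{B}_N^k$, $k\in\mathbb{Z}_m$, of $\mathcal{B}_N$ (the copy of $v$ in $\mathcal{B}_N^k$ denoted $v^k$), keeping all edges inside each copy, and adding for each $k\in\mathbb{Z}_m$ the edge $\mathbf{1}^k\sim\mathbf{0}^{k+1}$ (indices mod $m$). A Dirichlet eigenvector of $L(\mathcal{B}_N)$ is an eigenvector of $L(\mathcal{B}_N)$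 vanishing at $\mathbf{0}$ and $\mathbf{1}$. For a vertex function $\varphi$ on $\mathcal{B}_N$, $\iota_k\varphi$ is the function on $\mathcal{B}_N\vdash\mathcal{C}_m$ equal to $\varphi(u)$ at $u^k$ and to $0$ on $\mathcal{B}_N^\ell$, $\ell\ne k$. *)

theory Defs
  imports "HOL-Analysis.Analysis" "HOL-Library.Function_Algebras"
begin

text \<open>Boolean cube B_N: vertices are subsets of {0..<N} (indicator sets of vectors in Z_2^N);
  v ~ w iff they differ in exactly one coordinate.\<close>

definition cube_verts :: "nat \<Rightarrow> nat set set" where
  "cube_verts N = Pow {..<N}"

definition cube_adj :: "nat \<Rightarrow> nat set \<Rightarrow> nat set \<Rightarrow> bool" where
  "cube_adj N v w \<longleftrightarrow> (\<exists>i<N. w = (v - {i}) \<union> ({i} - v))"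

definition laplacian :: "'a set \<Rightarrow> ('a \<Rightarrow> 'a \<Rightarrow> bool) \<Rightarrow> ('a \<Rightarrow> real) \<Rightarrow> 'a \<Rightarrow> real" where
  "laplacian V adj f v = (\<Sum>w\<in>{w\<in>V. adj v w}. f v - f w)"

text \<open>Dirichlet eigenvector of L(B_N) with eigenvalue lam: a nonzero vertex function
  (extended by 0 outside the vertex set) with L phi = lam phi, vanishing at 0 = {} and 1 = {..<N}.\<close>

definition dirichlet_eigvec :: "nat \<Rightarrow> real \<Rightarrow> (nat set \<Rightarrow> real) \<Rightarrow> bool" where
  "dirichlet_eigvec N lam phi \<longleftrightarrow>
     (\<forall>v. v \<notin> cube_verts N \<longrightarrow> phi v = 0) \<and>
     (\<exists>v\<in>cube_verts N. phi v \<noteq> 0) \<and>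
     (\<forall>v\<in>cube_verts N. laplacian (cube_verts N) (cube_adj N) phi v = lam * phi v) \<and>
     phi {} = 0 \<and> phi {..<N} = 0"

text \<open>Vertices of B_N |- C_m are pairs (k, v) with k < m (copy index in Z_m) and v in B_N.
  iota k phi is phi on copy k and 0 elsewhere.\<close>

definition iota :: "nat \<Rightarrow> nat \<Rightarrow> (nat set \<Rightarrow> real) \<Rightarrow> (nat \<times> nat set \<Rightarrow> real)" where
  "iota N k phi = (\<lambda>(l, u). if l = k \<and> u \<in> cube_verts N then phi u else 0)"

definition fscale :: "real \<Rightarrow> ('a \<Rightarrow> real) \<Rightarrow> ('a \<Rightarrow> real)" where
  "fscale c f = (\<lambda>x. c * f x)"

lemma vector_space_fscale: "vector_space (fscale :: real \<Rightarrow> ('a \<Rightarrow> real) \<Rightarrow> _)"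
  by unfold_locales (auto simp: fscale_def algebra_simps)

end

theory Submission
  imports Defs
begin

(* The Walsh functions walsh g v = (-1)^|g \<inter> v| (the unnormalised Hadamard vectors) form an
   orthogonal basis of the functions on the cube, and walsh g is an eigenfunction of L(B_N) with
   eigenvalue 2|g|.  The Laplacian is self-adjoint, so an eigenfunction for 2K has its Fourier
   coefficients supported on the layer |g| = K; vanishing at the empty set says these
   coefficients sum to zero, and vanishing at the full set then follows because walsh g is
   (-1)^K there for every g in the layer.  Hence, for a fixed g0 in the layer, the Dirichlet
   eigenvectors span the space with basis h_g - h_g0 (g \<noteq> g0), of dimension C(N,K) - 1.  The
   m copies of this basis are independent, as the functionals
   F \<mapsto> 2^-N \<Sum>v F(l,v) walsh d v are biorthogonal to them. *)

interpretation fun_space: vector_space "fscale :: real \<Rightarrow> ('a \<Rightarrow> real) \<Rightarrow> 'a \<Rightarrow> real"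
  by (rule vector_space_fscale)

lemma sum_fun_apply: "(\<Sum>x\<in>A. F x) p = (\<Sum>x\<in>A. F x p :: 'b :: comm_monoid_add)"
  by (induction A rule: infinite_finite_induct) auto

lemma biorthogonal_imp_independent:
  fixes f :: "'i \<Rightarrow> 'a \<Rightarrow> real" and \<phi> :: "'i \<Rightarrow> ('a \<Rightarrow> real) \<Rightarrow> real"
  assumes hom: "\<And>i. i \<in> I \<Longrightarrow> module_hom fscale (*) (\<phi> i)"
    and dual: "\<And>i j. i \<in> I \<Longrightarrow> j \<in> I \<Longrightarrow> \<phi> i (f j) = (if i = j then 1 else 0)"
  shows "inj_on f I" and "fun_space.independent (f ` I)"
proof -
  show inj: "inj_on f I"
    by (rule inj_onI) (metis dual zero_neq_one)
  show "fun_space.independent (f ` I)"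
  proof
    assume "fun_space.dependent (f ` I)"
    then obtain T u b where T: "finite T" "T \<subseteq> f ` I" and "b \<in> T" "u b \<noteq> 0"
      and comb: "(\<Sum>c\<in>T. fscale (u c) c) = 0"
      unfolding fun_space.dependent_explicit by blast
    then obtain i where i: "i \<in> I" "b = f i" by blast
    interpret \<phi>: module_hom fscale "(*)" "\<phi> i" by (rule hom[OF i(1)])
    have "u c * \<phi> i c = (if c = b then u b else 0)" if "c \<in> T" for c
      using T that i inj by (auto simp: dual inj_on_eq_iff)
    then have "\<phi> i (\<Sum>c\<in>T. fscale (u c) c) = u b"
      using T \<open>b \<in> T\<close> by (simp add: \<phi>.sum \<phi>.scale cong: sum.cong)
    with comb \<open>u b \<noteq> 0\<close> show False by simp
  qed
qed

lemma laplacian_diff: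
  "laplacian V adj (f - h) v = laplacian V adj f v - laplacian V adj h v"
  by (simp add: laplacian_def sum_subtractf[symmetric] algebra_simps)

lemma sum_laplacian_mult_commute:
  assumes "finite V" and sym: "\<And>v w. adj v w \<longleftrightarrow> adj w v"
  shows "(\<Sum>v\<in>V. laplacian V adj f v * h v) = (\<Sum>v\<in>V. f v * laplacian V adj h v)"
proof -
  let ?N = "\<lambda>v. {w\<in>V. adj v w}"
  have cross: "(\<Sum>v\<in>V. \<Sum>w\<in>?N v. f w * h v) = (\<Sum>v\<in>V. \<Sum>w\<in>?N v. f v * h w)"
    using assms(1) by (simp add: sum.inter_filter) (subst sum.swap, simp add: sym)
  have "(\<Sum>v\<in>V. laplacian V adj f v * h v)
      = (\<Sum>v\<in>V. \<Sum>w\<in>?N v. f v * h v) - (\<Sum>v\<in>V. \<Sum>w\<in>?N v. f w * h v)"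
    by (simp only: laplacian_def sum_distrib_right left_diff_distrib sum_subtractf)
  also have "\<dots> = (\<Sum>v\<in>V. f v * laplacian V adj h v)"
    by (simp only: cross laplacian_def sum_distrib_left right_diff_distrib sum_subtractf)
  finally show ?thesis .
qed

definition cube_flip :: "nat set \<Rightarrow> nat \<Rightarrow> nat set" where
  "cube_flip v i = (v - {i}) \<union> ({i} - v)"

lemma finite_cube_verts [simp]: "finite (cube_verts N)"
  by (simp add: cube_verts_def)

lemma cube_flip_cube_flip [simp]: "cube_flip (cube_flip v i) i = v"
  by (auto simp: cube_flip_def)

lemma cube_flip_in_cube_verts: "v \<in> cube_verts N \<Longrightarrow> i < N \<Longrightarrow> cube_flip v i \<in> cube_verts N"
  by (auto simp: cube_flip_def cube_verts_def)

lemma inj_cube_flip: "inj (cube_flip v)"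
  by (rule injI) (auto simp: cube_flip_def)

lemma sum_cube_verts_cube_flip:
  assumes "i < N"
  shows "(\<Sum>v\<in>cube_verts N. F (cube_flip v i)) = (\<Sum>v\<in>cube_verts N. F v)"
  by (rule sum.reindex_bij_witness[where i="\<lambda>v. cube_flip v i" and j="\<lambda>v. cube_flip v i"])
     (auto intro: cube_flip_in_cube_verts[OF _ assms])

lemma cube_adj_cube_flip: "cube_adj N v w \<longleftrightarrow> (\<exists>i<N. w = cube_flip v i)"
  by (simp add: cube_adj_def cube_flip_def)

lemma cube_adj_commute: "cube_adj N v w \<longleftrightarrow> cube_adj N w v"
  by (metis cube_adj_cube_flip cube_flip_cube_flip)

lemma laplacian_cube:
  assumes "v \<in> cube_verts N"
  shows "laplacian (cube_verts N) (cube_adj N) f v = (\<Sum>i<N. f v - f (cube_flip v i))"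
proof -
  have "{w \<in> cube_verts N. cube_adj N v w} = cube_flip v ` {..<N}"
    using assms by (auto simp: cube_verts_def cube_adj_cube_flip cube_flip_def)
  then show ?thesis
    by (simp add: laplacian_def sum.reindex inj_on_subset[OF inj_cube_flip])
qed

definition walsh :: "nat set \<Rightarrow> nat set \<Rightarrow> real" where
  "walsh g v = (-1) ^ card (g \<inter> v)"

lemma walsh_commute: "walsh g v = walsh v g"
  by (simp add: walsh_def Int_commute)

lemma walsh_mult_self [simp]: "walsh g v * walsh g v = 1"
  by (simp add: walsh_def flip: power_add)

lemma walsh_empty [simp]: "walsh g {} = 1"
  by (simp add: walsh_def)

lemma walsh_cube_flip:
  assumes "finite g"
  shows "walsh g (cube_flip v i) = (if i \<in> g then - walsh g v else walsh g v)"
proof -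
  consider "i \<notin> g" | "i \<in> g" "i \<in> v" | "i \<in> g" "i \<notin> v" by blast
  then show ?thesis
  proof cases
    case 1
    then have "g \<inter> cube_flip v i = g \<inter> v" by (auto simp: cube_flip_def)
    with 1 show ?thesis by (simp add: walsh_def)
  next
    case 2
    then have "g \<inter> v = insert i (g \<inter> cube_flip v i)" "i \<notin> g \<inter> cube_flip v i"
      by (auto simp: cube_flip_def)
    with 2 assms show ?thesis by (simp add: walsh_def)
  next
    case 3
    then have "g \<inter> cube_flip v i = insert i (g \<inter> v)" "i \<notin> g \<inter> v"
      by (auto simp: cube_flip_def)
    with 3 assms show ?thesis by (simp add: walsh_def)
  qed
qed

lemma sum_walsh_mult:
  assumes "a \<in> cube_verts N" "b \<in> cube_verts N"
  shows "(\<Sum>v\<in>cube_verts N. walsh a v * walsh b v) = (if a = b then 2 ^ N else 0)"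
proof (cases "a = b")
  case True
  then show ?thesis by (simp add: cube_verts_def card_Pow)
next
  case False
  then obtain i where i: "i \<in> a \<longleftrightarrow> i \<notin> b" by blast
  with assms have "i < N" by (auto simp: cube_verts_def)
  have "finite a" "finite b" using assms finite_subset by (auto simp: cube_verts_def)
  have "(\<Sum>v\<in>cube_verts N. walsh a v * walsh b v)
      = (\<Sum>v\<in>cube_verts N. walsh a (cube_flip v i) * walsh b (cube_flip v i))"
    by (rule sum_cube_verts_cube_flip[OF \<open>i < N\<close>, symmetric])
  also have "\<dots> = - (\<Sum>v\<in>cube_verts N. walsh a v * walsh b v)"
    using i \<open>finite a\<close> \<open>finite b\<close>
    by (cases "i \<in> b") (simp_all add: walsh_cube_flip sum_negf)
  finally have "(\<Sum>v\<in>cube_verts N. walsh a v * walsh b v) = 0" by simp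
  with False show ?thesis by simp
qed

(* The Hadamard vector h_g of the paper, without the normalising factor 2^(-N/2). *)
definition hadamard :: "nat \<Rightarrow> nat set \<Rightarrow> nat set \<Rightarrow> real" where
  "hadamard N g v = (if v \<in> cube_verts N then walsh g v else 0)"

lemma laplacian_hadamard:
  assumes "g \<in> cube_verts N" "v \<in> cube_verts N"
  shows "laplacian (cube_verts N) (cube_adj N) (hadamard N g) v = 2 * card g * hadamard N g v"
proof -
  have "finite g" using assms(1) finite_subset by (auto simp: cube_verts_def)
  have "laplacian (cube_verts N) (cube_adj N) (hadamard N g) v
      = (\<Sum>i<N. if i \<in> g then 2 * walsh g v else 0)"
    unfolding laplacian_cube[OF assms(2)] using assms(2) \<open>finite g\<close>
    by (intro sum.cong) (auto simp: hadamard_def walsh_cube_flip cube_flip_in_cube_verts)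
  also have "\<dots> = (\<Sum>i\<in>g. 2 * walsh g v)"
    using assms(1) by (simp add: sum.If_cases Int_absorb1 cube_verts_def)
  finally show ?thesis using assms(2) by (simp add: hadamard_def)
qed

definition fourier_coeff :: "nat \<Rightarrow> (nat set \<Rightarrow> real) \<Rightarrow> nat set \<Rightarrow> real" where
  "fourier_coeff N f g = (\<Sum>w\<in>cube_verts N. f w * walsh g w)"

lemma fourier_inversion:
  assumes "v \<in> cube_verts N"
  shows "(\<Sum>g\<in>cube_verts N. fourier_coeff N f g * walsh g v) = 2 ^ N * f v"
proof -
  have "(\<Sum>g\<in>cube_verts N. fourier_coeff N f g * walsh g v)
      = (\<Sum>w\<in>cube_verts N. f w * (\<Sum>g\<in>cube_verts N. walsh w g * walsh v g))"
    unfolding fourier_coeff_def sum_distrib_left sum_distrib_right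
    by (subst sum.swap) (simp add: walsh_commute mult_ac)
  also have "\<dots> = (\<Sum>w\<in>cube_verts N. if w = v then 2 ^ N * f v else 0)"
    using assms by (intro sum.cong) (auto simp: sum_walsh_mult)
  finally show ?thesis using assms by simp
qed

lemma fourier_coeff_eq_0:
  fixes lam :: real
  assumes g: "g \<in> cube_verts N" and lam: "lam \<noteq> 2 * card g"
    and eig: "\<And>v. v \<in> cube_verts N \<Longrightarrow> laplacian (cube_verts N) (cube_adj N) f v = lam * f v"
  shows "fourier_coeff N f g = 0"
proof -
  have "lam * fourier_coeff N f g
      = (\<Sum>v\<in>cube_verts N. laplacian (cube_verts N) (cube_adj N) f v * hadamard N g v)"
    unfolding fourier_coeff_def sum_distrib_left by (intro sum.cong) (auto simp: eig hadamard_def)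
  also have "\<dots> = (\<Sum>v\<in>cube_verts N. f v * laplacian (cube_verts N) (cube_adj N) (hadamard N g) v)"
    by (rule sum_laplacian_mult_commute) (auto simp: cube_adj_commute)
  also have "\<dots> = 2 * card g * fourier_coeff N f g"
    unfolding fourier_coeff_def sum_distrib_left
    by (intro sum.cong) (auto simp: g laplacian_hadamard hadamard_def)
  finally show ?thesis using lam by simp
qed

definition cube_layer :: "nat \<Rightarrow> nat \<Rightarrow> nat set set" where
  "cube_layer N K = {g \<in> cube_verts N. card g = K}"

lemma card_cube_layer: "card (cube_layer N K) = N choose K"
  using n_subsets[of "{..<N}" K] by (simp add: cube_layer_def cube_verts_def)

lemma finite_cube_layer: "finite (cube_layer N K)"
  by (simp add: cube_layer_def)

lemma dirichlet_eigvec_hadamard_diff: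
  assumes g: "g \<in> cube_layer N K" and g0: "g0 \<in> cube_layer N K" and "g \<noteq> g0"
  shows "dirichlet_eigvec N (2 * real K) (hadamard N g - hadamard N g0)"
proof -
  obtain i where i: "i \<in> g \<longleftrightarrow> i \<notin> g0" using \<open>g \<noteq> g0\<close> by blast
  with g g0 have "{i} \<in> cube_verts N" by (auto simp: cube_layer_def cube_verts_def)
  moreover have "(hadamard N g - hadamard N g0) {i} \<noteq> 0"
    using i \<open>{i} \<in> cube_verts N\<close> by (auto simp: hadamard_def walsh_def)
  moreover have "laplacian (cube_verts N) (cube_adj N) (hadamard N g - hadamard N g0) v
      = 2 * real K * (hadamard N g - hadamard N g0) v" if "v \<in> cube_verts N" for v
    using g g0 that by (simp add: laplacian_diff laplacian_hadamard cube_layer_def algebra_simps)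
  moreover have "walsh g {..<N} = walsh g0 {..<N}"
    using g g0 by (simp add: walsh_def cube_layer_def cube_verts_def Int_absorb2)
  ultimately show ?thesis
    unfolding dirichlet_eigvec_def by (auto simp: hadamard_def cube_verts_def)
qed

lemma dirichlet_eigvec_in_span:
  assumes \<phi>: "dirichlet_eigvec N (2 * real K) \<phi>" and g0: "g0 \<in> cube_layer N K"
  shows "\<phi> \<in> fun_space.span ((\<lambda>g. hadamard N g - hadamard N g0) ` (cube_layer N K - {g0}))"
proof -
  let ?L = "cube_layer N K"
  let ?c = "\<lambda>g. fourier_coeff N \<phi> g / 2 ^ N"
  have expansion: "\<phi> v = (\<Sum>g\<in>?L. ?c g * walsh g v)" if v: "v \<in> cube_verts N" for v
  proof -
    have "2 ^ N * \<phi> v = (\<Sum>g\<in>cube_verts N. fourier_coeff N \<phi> g * walsh g v)"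
      using fourier_inversion[OF v] by simp
    also have "\<dots> = (\<Sum>g\<in>?L. fourier_coeff N \<phi> g * walsh g v)"
      using \<phi> by (intro sum.mono_neutral_right)
        (auto simp: cube_layer_def dirichlet_eigvec_def intro!: fourier_coeff_eq_0)
    finally show ?thesis
      by (simp add: sum_divide_distrib[symmetric] nonzero_eq_divide_eq mult.commute)
  qed
  have sum_c: "(\<Sum>g\<in>?L. ?c g) = 0"
    using expansion[of "{}"] \<phi> by (simp add: dirichlet_eigvec_def cube_verts_def)
  have "\<phi> = (\<Sum>g\<in>?L - {g0}. fscale (?c g) (hadamard N g - hadamard N g0))"
  proof
    fix v
    show "\<phi> v = (\<Sum>g\<in>?L - {g0}. fscale (?c g) (hadamard N g - hadamard N g0)) v"
    proof (cases "v \<in> cube_verts N")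
      case True
      have "\<phi> v = (\<Sum>g\<in>?L. ?c g * walsh g v) - (\<Sum>g\<in>?L. ?c g) * walsh g0 v"
        using expansion[OF True] sum_c by simp
      also have "\<dots> = (\<Sum>g\<in>?L. ?c g * (walsh g v - walsh g0 v))"
        by (simp add: sum_distrib_right sum_subtractf right_diff_distrib)
      also have "\<dots> = (\<Sum>g\<in>?L - {g0}. ?c g * (walsh g v - walsh g0 v))"
        using g0 by (intro sum.mono_neutral_right) (auto simp: finite_cube_layer)
      finally show ?thesis using True by (simp add: sum_fun_apply fscale_def hadamard_def)
    next
      case False
      with \<phi> show ?thesis
        by (simp add: sum_fun_apply fscale_def hadamard_def dirichlet_eigvec_def)
    qed
  qed
  then show ?thesis
    by (metis (no_types, lifting) fun_space.span_base fun_space.span_scale fun_space.span_sum imageI)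
qed

lemma module_hom_iota: "module_hom fscale fscale (iota N k)"
  by unfold_locales (auto simp: iota_def fscale_def fun_eq_iff)

lemma iota_in_span_iota_hadamard_diff:
  assumes "k \<in> I" "dirichlet_eigvec N (2 * real K) \<phi>" "g0 \<in> cube_layer N K"
  shows "iota N k \<phi> \<in> fun_space.span
    ((\<lambda>(k, g). iota N k (hadamard N g - hadamard N g0)) ` (I \<times> (cube_layer N K - {g0})))"
proof -
  let ?h = "\<lambda>g. hadamard N g - hadamard N g0"
  have "iota N k \<phi> \<in> iota N k ` fun_space.span (?h ` (cube_layer N K - {g0}))"
    using assms(2,3) by (simp add: dirichlet_eigvec_in_span)
  also have "\<dots> = fun_space.span ((\<lambda>g. iota N k (?h g)) ` (cube_layer N K - {g0}))"
    by (simp add: module_hom.span_image[OF module_hom_iota, symmetric] image_image)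
  also have "\<dots> \<subseteq> fun_space.span
      ((\<lambda>(k, g). iota N k (?h g)) ` (I \<times> (cube_layer N K - {g0})))"
    using assms(1) by (intro fun_space.span_mono image_subsetI) (auto intro: rev_image_eqI)
  finally show ?thesis .
qed

definition hadamard_dual :: "nat \<Rightarrow> nat \<Rightarrow> nat set \<Rightarrow> (nat \<times> nat set \<Rightarrow> real) \<Rightarrow> real" where
  "hadamard_dual N l d F = (\<Sum>v\<in>cube_verts N. F (l, v) * walsh d v) / 2 ^ N"

lemma module_hom_hadamard_dual: "module_hom fscale (*) (hadamard_dual N l d)"
  by unfold_locales
    (auto simp: hadamard_dual_def fscale_def sum.distrib sum_distrib_left algebra_simps
      add_divide_distrib)

lemma hadamard_dual_iota_hadamard_diff:
  assumes "g \<in> cube_verts N" "g0 \<in> cube_verts N" "d \<in> cube_verts N" "d \<noteq> g0"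
  shows "hadamard_dual N l d (iota N k (hadamard N g - hadamard N g0))
    = (if (l, d) = (k, g) then 1 else 0)"
proof (cases "l = k")
  case True
  have "hadamard_dual N l d (iota N k (hadamard N g - hadamard N g0))
      = (\<Sum>v\<in>cube_verts N. walsh g v * walsh d v - walsh g0 v * walsh d v) / 2 ^ N"
    unfolding hadamard_dual_def using True
    by (intro arg_cong[where f="\<lambda>x. x / _"] sum.cong) (auto simp: iota_def hadamard_def algebra_simps)
  with True assms show ?thesis by (simp add: sum_subtractf sum_walsh_mult)
next
  case False
  then show ?thesis by (simp add: hadamard_dual_def iota_def)
qed

lemma iota_hadamard_diff_independent:
  assumes "g0 \<in> cube_verts N" "G \<subseteq> cube_verts N - {g0}"
  defines "f \<equiv> \<lambda>(k, g). iota N k (hadamard N g - hadamard N g0)"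
  shows "inj_on f (I \<times> G)" and "fun_space.independent (f ` (I \<times> G))"
proof -
  have dual: "hadamard_dual N l d (f (k, g)) = (if (l, d) = (k, g) then 1 else 0)"
    if "g \<in> G" "d \<in> G" for k l g d
  proof -
    have "g \<in> cube_verts N" "d \<in> cube_verts N" "d \<noteq> g0" using that assms(2) by auto
    then show ?thesis by (simp add: f_def hadamard_dual_iota_hadamard_diff assms(1))
  qed
  show "inj_on f (I \<times> G)" and "fun_space.independent (f ` (I \<times> G))"
    by (intro biorthogonal_imp_independent[where \<phi>="\<lambda>(l, d). hadamard_dual N l d"];
        clarsimp simp: module_hom_hadamard_dual dual)+
qed

theorem lemma2:
  fixes N m K :: nat
  assumes "N \<ge> 2" and "m \<ge> 3" and "0 < K" and "K < N"
  shows "vector_space.dim fscale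
           (module.span fscale
              {iota N k phi | k phi. k < m \<and> dirichlet_eigvec N (2 * real K) phi})
         = m * ((N choose K) - 1)"
proof -
  let ?S = "{iota N k phi | k phi. k < m \<and> dirichlet_eigvec N (2 * real K) phi}"
  define g0 where "g0 = {..<K}"
  define G where "G = cube_layer N K - {g0}"
  define f where "f = (\<lambda>(k, g). iota N k (hadamard N g - hadamard N g0))"
  have g0: "g0 \<in> cube_layer N K"
    using \<open>K < N\<close> by (auto simp: g0_def cube_layer_def cube_verts_def)
  then have "G \<subseteq> cube_verts N - {g0}" "g0 \<in> cube_verts N"
    by (auto simp: G_def cube_layer_def)
  note independent = iota_hadamard_diff_independent[OF this(2,1), of "{..<m}", folded f_def]
  have "card (f ` ({..<m} \<times> G)) = m * ((N choose K) - 1)"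
    using independent(1) g0
    by (simp add: card_image card_cartesian_product G_def card_cube_layer finite_cube_layer)
  moreover have "f ` ({..<m} \<times> G) \<subseteq> ?S"
    using g0 by (auto simp: f_def G_def intro!: dirichlet_eigvec_hadamard_diff)
  moreover have "?S \<subseteq> fun_space.span (f ` ({..<m} \<times> G))"
    using g0 by (auto simp: f_def G_def intro: iota_in_span_iota_hadamard_diff)
  ultimately show ?thesis
    using fun_space.dim_unique[OF _ _ independent(2)] by simp
qed

end
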